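(* Let $n\geq 1$ and let $A\in \mathcal{M}_{n}(\mathbb{Z})$ with $\det(A)\neq 0$. Let $\Lambda=\{Az : z\in\mathbb{Z}^n\}$ be the lattice generated by the columns of $A$, let $\mathcal{P}_A=\{Ay : y\in[0,1)^n\}$ be its fundamental parallelepiped, and let $\mathcal{F}_A$ be the set of $A$-feasible lattice vectors. If $\lambda = Az\in\mathcal{F}_A$ with $z\in\mathbb{Z}^n$, then $$\|z\|\leq \left(\frac{\kappa(A)}{2}+1\right)\sqrt{n}.$$
   Context: $\|\cdot\|$ denotes the Euclidean norm on $\mathbb{R}^n$, and $d(x,y)=\|x-y\|$. For a subset $\Lambda\subseteq\mathbb{R}^n$, $d(x,\Lambda)=\min_{\lambda\in\Lambda}d(x,\lambda)$. For a matrix $M$, $\|M\|=\max_{\|y\|=1}\|My\|$ is the spectral norm, and for invertible $M$ the condition number is $\kappa(M)=\|M\|\cdot\|M^{-1}\|$. A lattice vector $\lambda\in\Lambda$ is called $A$-feasible if there exists $x\in\mathcal{P}_A$ with $d(\lambda,x)=d(x,\Lambda)$; $\mathcal{F}_A$ denotes the set of $A$-feasible lattice vectors. *)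

theory Defs
  imports "HOL-Analysis.Analysis"
begin

definition int_vec :: "real ^ 'n \<Rightarrow> bool" where
  "int_vec z \<longleftrightarrow> (\<forall>i. z $ i \<in> \<int>)"

definition int_matrix :: "real ^ 'n ^ 'm \<Rightarrow> bool" where
  "int_matrix A \<longleftrightarrow> (\<forall>i j. A $ i $ j \<in> \<int>)"

definition lattice_of :: "real ^ 'n ^ 'n \<Rightarrow> (real ^ 'n) set" where
  "lattice_of A = {A *v z | z. int_vec z}"

definition fund_par :: "real ^ 'n ^ 'n \<Rightarrow> (real ^ 'n) set" where
  "fund_par A = {A *v y | y. \<forall>i. 0 \<le> y $ i \<and> y $ i < 1}"

definition feasible_set :: "real ^ 'n ^ 'n \<Rightarrow> (real ^ 'n) set" where
  "feasible_set A = {l \<in> lattice_of A. \<exists>x \<in> fund_par A. dist l x = infdist x (lattice_of A)}"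

definition spec_norm :: "real ^ 'n ^ 'm \<Rightarrow> real" where
  "spec_norm M = Sup {norm (M *v y) | y. norm y = 1}"

definition cond_num :: "real ^ 'n ^ 'n \<Rightarrow> real" where
  "cond_num M = spec_norm M * spec_norm (matrix_inv M)"

end

theory Submission
  imports Defs
begin

text \<open>
  Write the witness of feasibility as \<open>x = A y\<close> with \<open>y \<in> [0,1)\<^sup>n\<close>. Rounding \<open>y\<close>
  componentwise gives a lattice point \<open>A r\<close> with \<open>\<parallel>y - r\<parallel> \<le> \<surd>n/2\<close>, so the nearest
  lattice point \<open>A z\<close> to \<open>x\<close> satisfies \<open>\<parallel>A z - x\<parallel> \<le> \<parallel>A\<parallel> \<surd>n/2\<close>. Applying \<open>A\<^sup>-\<^sup>1\<close> gives
  \<open>\<parallel>z - y\<parallel> \<le> \<kappa>(A) \<surd>n/2\<close>, and \<open>\<parallel>y\<parallel> \<le> \<surd>n\<close>.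
\<close>

lemma norm_matrix_vector_le_spec_norm:
  fixes M :: "real ^ 'n ^ 'm"
  shows "norm (M *v v) \<le> spec_norm M * norm v"
proof (cases "v = 0")
  case True
  then show ?thesis by simp
next
  case False
  obtain K where K: "\<And>x. norm (M *v x) \<le> norm x * K"
    using bounded_linear.bounded[OF matrix_vector_mul_bounded_linear[of M]] by blast
  have bdd: "bdd_above {norm (M *v y) | y. norm y = 1}"
    by (rule bdd_aboveI[of _ K]) (use K in \<open>auto, metis mult_1\<close>)
  let ?u = "(1 / norm v) *\<^sub>R v"
  have "norm (M *v ?u) \<le> spec_norm M"
    unfolding spec_norm_def by (rule cSup_upper[OF _ bdd]) (use False in auto)
  moreover have "M *v ?u = (1 / norm v) *\<^sub>R (M *v v)"
    by (simp add: matrix_vector_mult_scaleR)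
  ultimately have "norm (M *v v) / norm v \<le> spec_norm M" by simp
  then show ?thesis using False by (simp add: divide_le_eq mult.commute)
qed

lemma spec_norm_nonneg:
  fixes M :: "real ^ 'n ^ 'm"
  shows "0 \<le> spec_norm M"
  using norm_matrix_vector_le_spec_norm[of M "axis undefined 1"]
  by simp (meson norm_ge_zero order_trans)

lemma matrix_inv_left:
  fixes A :: "real ^ 'n ^ 'n"
  assumes "det A \<noteq> 0"
  shows "matrix_inv A ** A = mat 1"
  using assms invertible_det_nz unfolding invertible_def matrix_inv_def
  by (metis (mono_tags, lifting) someI_ex)

lemma norm_le_spec_norm_matrix_inv:
  fixes A :: "real ^ 'n ^ 'n"
  assumes "det A \<noteq> 0"
  shows "norm v \<le> spec_norm (matrix_inv A) * norm (A *v v)"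
  using norm_matrix_vector_le_spec_norm[of "matrix_inv A" "A *v v"]
  by (simp add: matrix_vector_mul_assoc matrix_inv_left[OF assms])

lemma norm_le_sqrt_card_if_abs_le:
  fixes v :: "real ^ 'n"
  assumes "\<And>i. \<bar>v $ i\<bar> \<le> c"
  shows "norm v \<le> c * sqrt (real CARD('n))"
proof -
  have "0 \<le> c" using assms[of undefined] by linarith
  have "(\<Sum>i\<in>UNIV. (v $ i)\<^sup>2) \<le> (\<Sum>i\<in>(UNIV::'n set). c\<^sup>2)"
    by (rule sum_mono) (use assms in \<open>metis abs_ge_zero power2_abs power_mono\<close>)
  then have "sqrt (\<Sum>i\<in>UNIV. (v $ i)\<^sup>2) \<le> sqrt (real CARD('n) * c\<^sup>2)"
    by simp
  also have "\<dots> = c * sqrt (real CARD('n))"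
    using \<open>0 \<le> c\<close> by (simp add: real_sqrt_mult)
  finally show ?thesis by (simp add: norm_vec_def L2_set_def)
qed

lemma exists_int_vec_near:
  fixes y :: "real ^ 'n"
  obtains r where "int_vec r" and "norm (y - r) \<le> sqrt (real CARD('n)) / 2"
proof
  let ?r = "\<chi> i. real_of_int (round (y $ i))"
  show "int_vec ?r" by (simp add: int_vec_def)
  have "\<And>i. \<bar>(y - ?r) $ i\<bar> \<le> 1/2"
    using of_int_round_abs_le by (simp add: abs_minus_commute)
  then show "norm (y - ?r) \<le> sqrt (real CARD('n)) / 2"
    using norm_le_sqrt_card_if_abs_le by fastforce
qed

lemma infdist_lattice_of_le:
  fixes A :: "real ^ 'n ^ 'n"
  shows "infdist (A *v y) (lattice_of A) \<le> spec_norm A * sqrt (real CARD('n)) / 2"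
proof -
  obtain r where r: "int_vec r" and yr: "norm (y - r) \<le> sqrt (real CARD('n)) / 2"
    by (rule exists_int_vec_near)
  have "infdist (A *v y) (lattice_of A) \<le> dist (A *v y) (A *v r)"
    using r by (intro infdist_le) (auto simp: lattice_of_def)
  also have "\<dots> = norm (A *v (y - r))"
    by (simp add: dist_norm matrix_vector_mult_diff_distrib)
  also have "\<dots> \<le> spec_norm A * norm (y - r)"
    by (rule norm_matrix_vector_le_spec_norm)
  also have "\<dots> \<le> spec_norm A * sqrt (real CARD('n)) / 2"
    using mult_left_mono[OF yr spec_norm_nonneg] by simp
  finally show ?thesis .
qed

theorem lemma2p3:
  fixes A :: "real ^ 'n ^ 'n" and z :: "real ^ 'n"
  assumes "int_matrix A" and "det A \<noteq> 0"
    and "int_vec z" and "A *v z \<in> feasible_set A"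
  shows "norm z \<le> (cond_num A / 2 + 1) * sqrt (real CARD('n))"
proof -
  let ?s = "sqrt (real CARD('n))"
  obtain y where y01: "\<And>i. 0 \<le> y $ i \<and> y $ i < 1"
    and nearest: "dist (A *v z) (A *v y) = infdist (A *v y) (lattice_of A)"
    using assms(4) unfolding feasible_set_def fund_par_def by blast
  have "norm (z - y) \<le> spec_norm (matrix_inv A) * norm (A *v (z - y))"
    using norm_le_spec_norm_matrix_inv[OF assms(2)] .
  also have "\<dots> \<le> spec_norm (matrix_inv A) * (spec_norm A * ?s / 2)"
    using nearest infdist_lattice_of_le[of A y]
    by (intro mult_left_mono spec_norm_nonneg)
       (simp add: dist_norm matrix_vector_mult_diff_distrib)
  also have "\<dots> = cond_num A / 2 * ?s" by (simp add: cond_num_def)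
  finally have "norm (z - y) \<le> cond_num A / 2 * ?s" .
  moreover have "norm y \<le> 1 * ?s"
    by (rule norm_le_sqrt_card_if_abs_le) (use y01 in \<open>simp add: abs_le_iff less_imp_le\<close>)
  moreover have "norm z \<le> norm (z - y) + norm y"
    using norm_triangle_sub[of z y] by linarith
  ultimately show ?thesis by (simp add: distrib_right)
qed

end
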